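(* Let $e$ be the environment assigning to every type variable the relation $=_{\beta\eta}$. Then: (1) for every $\forall^+$ type $P$, $\llbracket P\rrbracket_e \subseteq\ =_{\beta\eta}$ (i.e. $t\,\llbracket P\rrbracket_e\,t'$ implies $t=_{\beta\eta}t'$); (2) for every $\forall^-$ type $N$, $=_{\beta\eta}\ \subseteq \llbracket N\rrbracket_e$ (i.e. $t=_{\beta\eta}t'$ implies $t\,\llbracket N\rrbracket_e\,t'$).
   Context: Terms are those of the pure untyped $\lambda$-calculus, $t ::= x \mid \lambda x.t \mid t\,t'$, up to $\alpha$-equivalence; $=_{\beta\eta}$ is $\beta\eta$-convertibility. Relational types are given by $R ::= X \mid R\to R' \mid \forall X.R \mid R^{\cup} \mid R\cdot R' \mid t$, where $X$ ranges over type variables and the last form is the promotion of a term $t$ to a type. A binary relation $r$ on terms is $\beta\eta$-closed if $t_1\,r\,t_2$, $t_1'=_{\beta\eta}t_1$, $t_2'=_{\beta\eta}t_2$ imply $t_1'\,r\,t_2'$; $\mathcal{R}$ is the set of such relations. An environment $\gamma$ maps type variables to elements of $\mathcal{R}$; $\gamma[X\mapsto r]$ is its update. The interpretation (written $t\,\llbracket R\rrbracket_\gamma\,t'$ for membership) is: $\llbracket X\rrbracket_\gamma=\gamma(X)$; $t\,\llbracket R\to R'\rrbracket_\gamma\,t'$ iff for all $a,a'$ with $a\,\llbracket R\rrbracket_\gamma\,a'$ we have $t\,a\,\llbracket R'\rrbracket_\gamma\,t'\,a'$; $\llbracket \forall X.R\rrbracket_\gamma=\bigcap_{r\in\mathcal{R}}\llbracket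 R\rrbracket_{\gamma[X\mapsto r]}$; $t\,\llbracket R^\cup\rrbracket_\gamma\,t'$ iff $t'\,\llbracket R\rrbracket_\gamma\,t$; $t\,\llbracket R\cdot R'\rrbracket_\gamma\,t'$ iff there is $t''$ with $t\,\llbracket R\rrbracket_\gamma\,t''$ and $t''\,\llbracket R'\rrbracket_\gamma\,t'$; $\llbracket \hat t\rrbracket_\gamma=\{(t,t')\mid \hat t\,t=_{\beta\eta}t'\}$ for a promoted term $\hat t$. Polarities are $p\in\{+,-\}$, with $\bar p$ the other polarity. The property $\forall^p$ of types is defined inductively: every type variable is $\forall^p$; if $R$ is $\forall^{\bar p}$ and $R'$ is $\forall^p$ then $R\to R'$ is $\forall^p$; if $R$ is $\forall^+$ then $\forall X.R$ is $\forall^+$; if $R$ is $\forall^p$ then $R^\cup$ is $\forall^p$; the promotion of a term $t$ with $t=_{\beta\eta}\lambda x.x$ is $\forall^p$ (no other types are $\forall^p$). *)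

theory Defs
  imports Main
begin

datatype dB = Var nat | App dB dB | Abs dB

primrec lift :: "dB \<Rightarrow> nat \<Rightarrow> dB" where
  "lift (Var i) k = (if i < k then Var i else Var (i + 1))"
| "lift (App s t) k = App (lift s k) (lift t k)"
| "lift (Abs s) k = Abs (lift s (k + 1))"

primrec subst :: "dB \<Rightarrow> dB \<Rightarrow> nat \<Rightarrow> dB" where
  "subst (Var i) s k = (if k < i then Var (i - 1) else if i = k then s else Var i)"
| "subst (App t u) s k = App (subst t s k) (subst u s k)"
| "subst (Abs t) s k = Abs (subst t (lift s 0) (k + 1))"

inductive beta :: "dB \<Rightarrow> dB \<Rightarrow> bool" where
  beta_rule: "beta (App (Abs s) t) (subst s t 0)"
| beta_appL: "beta s t \<Longrightarrow> beta (App s u) (App t u)"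
| beta_appR: "beta s t \<Longrightarrow> beta (App u s) (App u t)"
| beta_abs: "beta s t \<Longrightarrow> beta (Abs s) (Abs t)"

inductive eta :: "dB \<Rightarrow> dB \<Rightarrow> bool" where
  eta_rule: "eta (Abs (App (lift s 0) (Var 0))) s"
| eta_appL: "eta s t \<Longrightarrow> eta (App s u) (App t u)"
| eta_appR: "eta s t \<Longrightarrow> eta (App u s) (App u t)"
| eta_abs: "eta s t \<Longrightarrow> eta (Abs s) (Abs t)"

definition betaeta :: "dB \<Rightarrow> dB \<Rightarrow> bool" where
  "betaeta = equivclp (sup beta eta)"

definition bclosed :: "(dB \<Rightarrow> dB \<Rightarrow> bool) \<Rightarrow> bool" where
  "bclosed r \<longleftrightarrow> (\<forall>t1 t2 t1' t2'. r t1 t2 \<longrightarrow> betaeta t1' t1 \<longrightarrow> betaeta t2' t2 \<longrightarrow> r t1' t2')"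

datatype 'v rtype =
    TVar 'v
  | Arr "'v rtype" "'v rtype"
  | All 'v "'v rtype"
  | Conv "'v rtype"
  | Comp "'v rtype" "'v rtype"
  | Prom dB

fun interp :: "'v rtype \<Rightarrow> ('v \<Rightarrow> dB \<Rightarrow> dB \<Rightarrow> bool) \<Rightarrow> dB \<Rightarrow> dB \<Rightarrow> bool" where
  "interp (TVar X) \<gamma> = \<gamma> X"
| "interp (Arr R R') \<gamma> =
     (\<lambda>t t'. \<forall>a a'. interp R \<gamma> a a' \<longrightarrow> interp R' \<gamma> (App t a) (App t' a'))"
| "interp (All X R) \<gamma> = (\<lambda>t t'. \<forall>r. bclosed r \<longrightarrow> interp R (\<gamma>(X := r)) t t')"
| "interp (Conv R) \<gamma> = (\<lambda>t t'. interp R \<gamma> t' t)"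
| "interp (Comp R R') \<gamma> = (\<lambda>t t'. \<exists>t''. interp R \<gamma> t t'' \<and> interp R' \<gamma> t'' t')"
| "interp (Prom s) \<gamma> = (\<lambda>t t'. betaeta (App s t) t')"

datatype pol = Pos | Neg

fun flip :: "pol \<Rightarrow> pol" where
  "flip Pos = Neg"
| "flip Neg = Pos"

inductive allp :: "pol \<Rightarrow> 'v rtype \<Rightarrow> bool" where
  allp_var: "allp p (TVar X)"
| allp_arr: "allp (flip p) R \<Longrightarrow> allp p R' \<Longrightarrow> allp p (Arr R R')"
| allp_all: "allp Pos R \<Longrightarrow> allp Pos (All X R)"
| allp_conv: "allp p R \<Longrightarrow> allp p (Conv R)"
| allp_prom: "betaeta t (Abs (Var 0)) \<Longrightarrow> allp p (Prom t)"

end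

theory Submission
  imports Defs
begin

(* Induction on the derivation of the polarity judgement, with all type variables read as
   beta-eta convertibility.  A converse is harmless since convertibility is symmetric, and a
   promoted term convertible to the identity denotes convertibility because I t =beta t.
   A positive quantifier can be instantiated with convertibility itself, which is beta-eta-closed.
   For a negative arrow, convertible functions applied to convertible arguments stay convertible.
   For a positive arrow R -> R', the negative domain contains a =be a, so t a =be t' a for every
   term a; choosing a fresh variable for a, eta-extensionality gives t =be t'. *)

lemma lift_lift: "i < k + 1 \<Longrightarrow> lift (lift t i) (Suc k) = lift (lift t k) i"
  by (induct t arbitrary: i k) auto

lemma lift_subst_lt: "i < j + 1 \<Longrightarrow> lift (subst t s j) i = subst (lift t i) (lift s i) (j + 1)"
  by (induct t arbitrary: i j s) (auto simp: lift_lift)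

lemma lift_subst: "j < i + 1 \<Longrightarrow> lift (subst t s j) i = subst (lift t (i + 1)) (lift s i) j"
  by (induct t arbitrary: i j s) (auto simp: diff_Suc split: nat.split, simp_all add: lift_lift)

lemma subst_lift [simp]: "subst (lift t k) s k = t"
  by (induct t arbitrary: k s) auto

lemma subst_subst:
  "i < j + 1 \<Longrightarrow> subst (subst t (lift v i) (Suc j)) (subst u v j) i = subst (subst t u i) v j"
proof (induct t arbitrary: i j u v)
  case (Var n)
  then show ?case
    by (auto simp: diff_Suc lift_lift lift_subst lift_subst_lt split: nat.split)
next
  case (App t1 t2)
  then show ?case by simp
next
  case (Abs t)
  have "subst (subst t (lift (lift v 0) (Suc i)) (Suc (Suc j))) (subst (lift u 0) (lift v 0) (Suc j)) (Suc i)
      = subst (subst t (lift u 0) (Suc i)) (lift v 0) (Suc j)"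
    using Abs by simp
  then show ?case by (simp add: lift_lift lift_subst_lt)
qed

lemma beta_lift: "beta s t \<Longrightarrow> beta (lift s i) (lift t i)"
proof (induct arbitrary: i rule: beta.induct)
  case (beta_rule s t)
  show ?case using beta.beta_rule[of "lift s (Suc i)" "lift t i"] by (simp add: lift_subst)
qed (auto intro: beta.intros)

lemma beta_subst: "beta s t \<Longrightarrow> beta (subst s u i) (subst t u i)"
proof (induct arbitrary: u i rule: beta.induct)
  case (beta_rule s t)
  show ?case using beta.beta_rule[of "subst s (lift u 0) (Suc i)" "subst t u i"]
    by (simp add: subst_subst[symmetric])
qed (auto intro: beta.intros)

lemma eta_lift: "eta s t \<Longrightarrow> eta (lift s i) (lift t i)"
proof (induct arbitrary: i rule: eta.induct)
  case (eta_rule s)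
  show ?case using eta.eta_rule[of "lift s i"] by (simp add: lift_lift)
qed (auto intro: eta.intros)

lemma eta_subst: "eta s t \<Longrightarrow> eta (subst s u i) (subst t u i)"
proof (induct arbitrary: u i rule: eta.induct)
  case (eta_rule s)
  show ?case using eta.eta_rule[of "subst s u i"] by (simp add: lift_subst_lt)
qed (auto intro: eta.intros)

lemma equivclp_map:
  assumes "\<And>x y. r x y \<Longrightarrow> r (f x) (f y)" and "equivclp r x y"
  shows "equivclp r (f x) (f y)"
  using assms(2)
proof (induct rule: equivclp_induct)
  case base
  then show ?case by simp
next
  case (step y z)
  then show ?case by (blast intro: assms(1) equivclp_into_equivclp)
qed

lemma betaeta_map:
  assumes "\<And>x y. sup beta eta x y \<Longrightarrow> sup beta eta (f x) (f y)" and "betaeta x y"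
  shows "betaeta (f x) (f y)"
  using assms equivclp_map unfolding betaeta_def by metis

lemma betaeta_lift: "betaeta s t \<Longrightarrow> betaeta (lift s i) (lift t i)"
  by (rule betaeta_map) (auto intro: beta_lift eta_lift)

lemma betaeta_subst: "betaeta s t \<Longrightarrow> betaeta (subst s u i) (subst t u i)"
  by (rule betaeta_map[where f = "\<lambda>x. subst x u i"]) (auto intro: beta_subst eta_subst)

lemma betaeta_AppL: "betaeta s t \<Longrightarrow> betaeta (App s u) (App t u)"
  by (rule betaeta_map[where f = "\<lambda>x. App x u"]) (auto intro: beta.intros eta.intros)

lemma betaeta_AppR: "betaeta s t \<Longrightarrow> betaeta (App u s) (App u t)"
  by (rule betaeta_map[where f = "App u"]) (auto intro: beta.intros eta.intros)

lemma betaeta_Abs: "betaeta s t \<Longrightarrow> betaeta (Abs s) (Abs t)"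
  by (rule betaeta_map[where f = Abs]) (auto intro: beta.intros eta.intros)

lemma betaeta_refl [simp]: "betaeta s s"
  unfolding betaeta_def by simp

lemma betaeta_sym: "betaeta s t \<Longrightarrow> betaeta t s"
  unfolding betaeta_def by (rule equivclp_sym)

lemma betaeta_trans: "betaeta s t \<Longrightarrow> betaeta t u \<Longrightarrow> betaeta s u"
  unfolding betaeta_def by (rule equivclp_trans)

lemma beta_into_betaeta: "beta s t \<Longrightarrow> betaeta s t"
  unfolding betaeta_def by (rule r_into_equivclp) simp

lemma eta_into_betaeta: "eta s t \<Longrightarrow> betaeta s t"
  unfolding betaeta_def by (rule r_into_equivclp) simp

lemma betaeta_App: "betaeta s s' \<Longrightarrow> betaeta t t' \<Longrightarrow> betaeta (App s t) (App s' t')"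
  by (blast intro: betaeta_trans betaeta_AppL betaeta_AppR)

lemma betaeta_App_identity:
  assumes "betaeta i (Abs (Var 0))"
  shows "betaeta (App i t) t"
proof -
  have "betaeta (App i t) (App (Abs (Var 0)) t)" using assms by (rule betaeta_AppL)
  moreover have "betaeta (App (Abs (Var 0)) t) t"
    using beta_into_betaeta[OF beta.beta_rule[of "Var 0" t]] by simp
  ultimately show ?thesis by (rule betaeta_trans)
qed

lemma bclosed_betaeta: "bclosed betaeta"
  unfolding bclosed_def by (blast intro: betaeta_trans betaeta_sym)

primrec closed_at :: "nat \<Rightarrow> dB \<Rightarrow> bool" where
  "closed_at k (Var i) \<longleftrightarrow> i < k"
| "closed_at k (App s t) \<longleftrightarrow> closed_at k s \<and> closed_at k t"
| "closed_at k (Abs s) \<longleftrightarrow> closed_at (Suc k) s"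

lemma subst_closed_at: "closed_at k u \<Longrightarrow> subst u s k = u"
  by (induct u arbitrary: k s) auto

lemma closed_at_lift: "closed_at k u \<Longrightarrow> closed_at (Suc k) (lift u j)"
  by (induct u arbitrary: k j) auto

lemma closed_at_mono: "closed_at k u \<Longrightarrow> k \<le> m \<Longrightarrow> closed_at m u"
  by (induct u arbitrary: k m) auto

lemma ex_closed_at: "\<exists>k. closed_at k u"
proof (induct u)
  case (Var x)
  then show ?case by (intro exI[of _ "Suc x"]) simp
next
  case (App u1 u2)
  then obtain a b where "closed_at a u1" "closed_at b u2" by blast
  then show ?case by (intro exI[of _ "max a b"]) (auto intro: closed_at_mono)
next
  case (Abs u)
  then obtain a where "closed_at a u" by blast
  then show ?case by (intro exI[of _ a]) (auto intro: closed_at_mono)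
qed

lemma betaeta_ext:
  assumes "\<And>a. betaeta (App t a) (App t' a)"
  shows "betaeta t t'"
proof -
  obtain n where closed: "closed_at n t" "closed_at n t'"
    using ex_closed_at[of t] ex_closed_at[of t'] closed_at_mono
    by (metis max.cobounded1 max.cobounded2)
  \<comment> \<open>Shift everything up and rename the fresh variable n, now n + 1, to 0.\<close>
  have "betaeta (subst (lift (App t (Var n)) 0) (Var 0) (Suc n))
                (subst (lift (App t' (Var n)) 0) (Var 0) (Suc n))"
    by (intro betaeta_subst betaeta_lift assms)
  then have "betaeta (App (lift t 0) (Var 0)) (App (lift t' 0) (Var 0))"
    using subst_closed_at[OF closed_at_lift[OF closed(1)]]
      subst_closed_at[OF closed_at_lift[OF closed(2)]]
    by simp
  then have "betaeta (Abs (App (lift t 0) (Var 0))) (Abs (App (lift t' 0) (Var 0)))"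
    by (rule betaeta_Abs)
  then show ?thesis
    by (meson eta_into_betaeta betaeta_sym betaeta_trans eta.eta_rule)
qed

lemma interp_Arr_le_betaeta:
  assumes "betaeta \<le> interp R \<gamma>" and "interp R' \<gamma> \<le> betaeta"
  shows "interp (Arr R R') \<gamma> \<le> betaeta"
proof (intro predicate2I)
  fix t t'
  assume "interp (Arr R R') \<gamma> t t'"
  moreover have "interp R \<gamma> a a" for a
    using assms(1) by (rule predicate2D) simp
  ultimately have "interp R' \<gamma> (App t a) (App t' a)" for a
    by simp
  then show "betaeta t t'"
    using assms(2) by (blast intro: betaeta_ext)
qed

lemma betaeta_le_interp_Arr:
  assumes "interp R \<gamma> \<le> betaeta" and "betaeta \<le> interp R' \<gamma>"
  shows "betaeta \<le> interp (Arr R R') \<gamma>"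
  using assms by (auto intro!: predicate2I betaeta_App)

lemma interp_Conv: "interp (Conv R) \<gamma> = (interp R \<gamma>)\<inverse>\<inverse>"
  by auto

lemma interp_All_le: "bclosed r \<Longrightarrow> interp (All X R) \<gamma> \<le> interp R (\<gamma>(X := r))"
  by auto

lemma interp_Prom_identity:
  assumes "betaeta i (Abs (Var 0))"
  shows "interp (Prom i) \<gamma> = betaeta"
proof (intro ext)
  fix t t'
  have "betaeta (App i t) t" using assms by (rule betaeta_App_identity)
  then show "interp (Prom i) \<gamma> t t' = betaeta t t'"
    by (auto intro: betaeta_trans betaeta_sym)
qed

fun betaeta_bound :: "pol \<Rightarrow> (dB \<Rightarrow> dB \<Rightarrow> bool) \<Rightarrow> bool" where
  "betaeta_bound Pos r \<longleftrightarrow> r \<le> betaeta"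
| "betaeta_bound Neg r \<longleftrightarrow> betaeta \<le> r"

lemma betaeta_bound_conversep: "betaeta_bound p r \<Longrightarrow> betaeta_bound p r\<inverse>\<inverse>"
  by (cases p) (auto intro: betaeta_sym)

lemma allp_betaeta_bound: "allp p R \<Longrightarrow> betaeta_bound p (interp R (\<lambda>X. betaeta))"
proof (induct rule: allp.induct)
  case (allp_var p X)
  then show ?case by (cases p) auto
next
  case (allp_arr p R R')
  then show ?case
    by (cases p) (simp_all del: interp.simps add: interp_Arr_le_betaeta betaeta_le_interp_Arr)
next
  case (allp_all R X)
  have "(\<lambda>X. betaeta)(X := betaeta) = (\<lambda>X. betaeta)" by auto
  then have "interp (All X R) (\<lambda>X. betaeta) \<le> interp R (\<lambda>X. betaeta)"
    using interp_All_le[OF bclosed_betaeta] by metis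
  with allp_all(2) show ?case by (metis betaeta_bound.simps(1) order_trans)
next
  case (allp_conv p R)
  then show ?case unfolding interp_Conv by (blast intro: betaeta_bound_conversep)
next
  case (allp_prom i p)
  then show ?case by (cases p) (simp_all del: interp.simps add: interp_Prom_identity)
qed

theorem mainTheorem1:
  fixes e :: "'v \<Rightarrow> dB \<Rightarrow> dB \<Rightarrow> bool"
  assumes "e = (\<lambda>X. betaeta)"
  shows "(\<forall>P :: 'v rtype. allp Pos P \<longrightarrow> (\<forall>t t'. interp P e t t' \<longrightarrow> betaeta t t'))
       \<and> (\<forall>N :: 'v rtype. allp Neg N \<longrightarrow> (\<forall>t t'. betaeta t t' \<longrightarrow> interp N e t t'))"
  using allp_betaeta_bound[of Pos] allp_betaeta_bound[of Neg] unfolding assms by auto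

end
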